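(* Given positive integers $m_1,\dots,m_n$, there exist a critically fixed polynomial $P$ and distinct critical points $c_1,\dots,c_n$ of $P$ such that the multiplicity of $c_i$ is $m_i$ for each $i\in\{1,\dots,n\}$.
   Context: A rational map (in particular a polynomial, viewed as a self-map of $\widehat{\mathbb{C}}$) is critically fixed if each of its critical points is a fixed point. *)

theory Defs
  imports "HOL-Computational_Algebra.Polynomial"
begin

text \<open>A complex polynomial P of degree at least 2, viewed as a self-map of the
Riemann sphere. Its critical points are the finite zeros of its derivative
together with the point at infinity (which is always fixed by P).
A finite critical point c has multiplicity = (local degree of P at c) - 1,
which equals the order of c as a root of the derivative.\<close>

definition is_crit_point :: "complex poly \<Rightarrow> complex \<Rightarrow> bool" where
  "is_crit_point P c \<longleftrightarrow> poly (pderiv P) c = 0"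

definition crit_mult :: "complex poly \<Rightarrow> complex \<Rightarrow> nat" where
  "crit_mult P c = order c (pderiv P)"

text \<open>Critically fixed: every critical point is fixed. The critical point at
infinity of a polynomial is automatically fixed, so only finite critical
points need to be checked.\<close>
definition critically_fixed_poly :: "complex poly \<Rightarrow> bool" where
  "critically_fixed_poly P \<longleftrightarrow>
     degree P \<ge> 2 \<and> (\<forall>c. is_crit_point P c \<longrightarrow> poly P c = c)"

end

theory Submission
  imports Defs "HOL-Analysis.Analysis" "HOL-Real_Asymp.Real_Asymp"
begin

text \<open>Take P with P(0) = 0 and P' = z^K (z - c_1)^m_1 ... (z - c_n)^m_n for distinct nonzero c_j.
  Its finite critical points are 0, which is fixed, and the c_j with multiplicities m_j, so it
  remains to solve the n equations P(c_j) = c_j. Integrating along [0, c_j] gives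
  P(c_j) = (-1)^m_j c_j^(K+m_j+1) G_j(c), where G_j(c) integrates s^K (1 - s)^m_j over [0, 1]
  against the product of the other factors (c_j s - c_i)^m_i. As K grows the weight concentrates
  at s = 1, so G_j(c) is B(K+1, m_j+1) times that product at s = 1, up to a relative error O(1/K).
  Hence the equations ask c_j to be a (K+m_j)-th root of a quantity that depends only weakly on c.
  Starting from distinct points q_j on the unit circle and always taking the root near q_j gives a
  map which, for large K, contracts a small polydisc around q into itself; its fixed point solves
  the system.\<close>

definition prescribed_pderiv ::
    "nat \<Rightarrow> nat set \<Rightarrow> (nat \<Rightarrow> nat) \<Rightarrow> (nat \<Rightarrow> complex) \<Rightarrow> complex poly" where
  "prescribed_pderiv K I m c = monom 1 K * (\<Prod>i\<in>I. [:- c i, 1:] ^ m i)"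

lemma poly_prescribed_pderiv:
  "poly (prescribed_pderiv K I m c) w = w ^ K * (\<Prod>i\<in>I. (w - c i) ^ m i)"
  by (simp add: prescribed_pderiv_def poly_monom poly_prod)

lemma order_prescribed_pderiv:
  assumes "finite I" "j \<in> I" "inj_on c I" "c j \<noteq> 0"
  shows "order (c j) (prescribed_pderiv K I m c) = m j"
proof -
  define R where "R = monom 1 K * (\<Prod>i\<in>I-{j}. [:- c i, 1:] ^ m i)"
  have split: "prescribed_pderiv K I m c = [:- c j, 1:] ^ m j * R"
    using assms(1,2) by (simp add: prescribed_pderiv_def R_def prod.remove algebra_simps)
  have "poly R (c j) \<noteq> 0"
    using assms by (auto simp: R_def poly_monom poly_prod inj_on_def)
  then have "R \<noteq> 0" "order (c j) R = 0"
    by (auto simp: order_0I)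
  then show ?thesis
    unfolding split by (simp add: order_mult order_power_n_n)
qed

lemma exists_antiderivative:
  fixes Q :: "complex poly"
  shows "\<exists>P. pderiv P = Q \<and> poly P 0 = 0"
proof -
  define P where "P = (\<Sum>i\<le>degree Q. monom (coeff Q i / of_nat (Suc i)) (Suc i))"
  have "pderiv P = (\<Sum>i\<le>degree Q. pderiv (monom (coeff Q i / of_nat (Suc i)) (Suc i)))"
    unfolding P_def using higher_pderiv_sum[of 1] by simp
  also have "\<dots> = (\<Sum>i\<le>degree Q. monom (coeff Q i) i)"
    by (intro sum.cong refl) (simp add: pderiv_monom del: of_nat_Suc)
  also have "\<dots> = Q"
    by (rule poly_as_sum_of_monoms)
  finally show ?thesis
    by (intro exI[of _ P]) (simp add: P_def poly_sum poly_monom)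
qed

lemma poly_diff_eq_integral_pderiv:
  fixes P :: "complex poly"
  shows "poly P z - poly P 0 = z * integral {0..1} (\<lambda>s. poly (pderiv P) (z * of_real s))"
proof -
  have "((\<lambda>s. poly P (z * of_real s)) has_vector_derivative poly (pderiv P) (z * of_real s) * z)
          (at s within {0..1})" for s
    by (rule has_vector_derivative_real_field, rule DERIV_chain2[where f = "poly P"])
       (auto intro!: derivative_eq_intros)
  then have "((\<lambda>s. poly (pderiv P) (z * of_real s) * z) has_integral
               poly P (z * of_real 1) - poly P (z * of_real 0)) {0..1}"
    by (intro fundamental_theorem_of_calculus) auto
  then have "integral {0..1} (\<lambda>s. poly (pderiv P) (z * of_real s) * z)
               = poly P (z * of_real 1) - poly P (z * of_real 0)"
    by (rule integral_unique)
  then show ?thesis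
    by (simp add: mult.commute)
qed

lemma crit_mult_antiderivative:
  assumes "pderiv P = prescribed_pderiv K I m c" "finite I" "j \<in> I" "inj_on c I" "c j \<noteq> 0"
    and "0 < m j"
  shows "is_crit_point P (c j) \<and> crit_mult P (c j) = m j"
  using assms order_prescribed_pderiv[OF assms(2-5)]
  by (auto simp: is_crit_point_def crit_mult_def poly_prescribed_pderiv intro!: prod_zero bexI[of _ j])

lemma critically_fixed_antiderivative:
  assumes P': "pderiv P = prescribed_pderiv K I m c" and P0: "poly P 0 = 0"
    and fixes_c: "\<And>j. j \<in> I \<Longrightarrow> poly P (c j) = c j"
    and I: "finite I" "I \<noteq> {}" and m: "\<And>j. j \<in> I \<Longrightarrow> 0 < m j"
  shows "critically_fixed_poly P"
  unfolding critically_fixed_poly_def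
proof
  obtain j where j: "j \<in> I" using I by blast
  have nonzero: "pderiv P \<noteq> 0"
    using I by (simp add: P' prescribed_pderiv_def)
  have root: "poly (pderiv P) (c j) = 0"
    using j m I by (auto simp: P' poly_prescribed_pderiv intro!: prod_zero bexI[of _ j])
  have "degree (pderiv P) \<noteq> 0"
  proof
    assume "degree (pderiv P) = 0"
    then obtain a where "pderiv P = [:a:]" by (rule degree_eq_zeroE)
    with nonzero root show False by simp
  qed
  then show "2 \<le> degree P"
    by (simp add: degree_pderiv)
  show "\<forall>z. is_crit_point P z \<longrightarrow> poly P z = z"
    using P0 fixes_c I by (auto simp: is_crit_point_def P' poly_prescribed_pderiv)
qed

definition beta_weight :: "nat \<Rightarrow> nat \<Rightarrow> real \<Rightarrow> real" where
  "beta_weight K r s = s ^ K * (1 - s) ^ r"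

definition beta_nat :: "nat \<Rightarrow> nat \<Rightarrow> real" where
  "beta_nat K r = fact K * fact r / fact (K + r + 1)"

lemma continuous_on_beta_weight: "continuous_on S (beta_weight K r)"
  unfolding beta_weight_def by (intro continuous_intros)

lemma beta_weight_nonneg: "s \<in> {0..1} \<Longrightarrow> 0 \<le> beta_weight K r s"
  by (simp add: beta_weight_def)

lemma beta_weight_Suc: "beta_weight K (Suc r) s = beta_weight K r s * (1 - s)"
  by (simp add: beta_weight_def)

lemma has_integral_beta_weight: "(beta_weight K r has_integral beta_nat K r) {0..1}"
proof -
  have "((\<lambda>t. t powr (real K + 1 - 1) * (1 - t) powr (real r + 1 - 1))
          has_integral Beta (real K + 1) (real r + 1)) {0<..<1}"
    using has_integral_Beta_real[of "real K + 1" "real r + 1"]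
    by (simp add: has_integral_Icc_iff_Ioo)
  then have Beta: "(beta_weight K r has_integral Beta (real K + 1) (real r + 1)) {0..1}"
    by (subst has_integral_Icc_iff_Ioo, rule has_integral_cong[THEN iffD1, rotated])
       (auto simp: beta_weight_def powr_realpow)
  have Gamma_Suc: "Gamma (real k + 1) = fact k" for k
    using Gamma_fact[of k] by (simp add: add.commute)
  have "Gamma (real K + 1 + (real r + 1)) = fact (K + r + 1)"
    using Gamma_Suc[of "K + r + 1"] by (simp add: algebra_simps)
  then have "Beta (real K + 1) (real r + 1) = beta_nat K r"
    by (simp only: Beta_def beta_nat_def Gamma_Suc)
  with Beta show ?thesis by simp
qed

lemma beta_nat_pos: "0 < beta_nat K r"
  by (simp add: beta_nat_def)

lemma beta_nat_Suc: "beta_nat K (Suc r) = beta_nat K r * (real r + 1) / (real K + real r + 2)"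
  by (simp add: beta_nat_def field_simps)

lemma beta_nat_le_1: "beta_nat K r \<le> 1"
proof -
  have "fact K * fact r \<le> (fact (K + r) :: nat)"
    by (intro dvd_imp_le fact_fact_dvd_fact) auto
  also have "\<dots> \<le> fact (K + r + 1)"
    by (rule fact_mono) auto
  finally have "(fact K * fact r :: real) \<le> fact (K + r + 1)"
    by (metis of_nat_fact of_nat_le_iff of_nat_mult)
  then show ?thesis by (simp add: beta_nat_def)
qed

lemma fact_add_le: "fact (K + r) \<le> (fact K :: real) * (real K + real r) ^ r"
proof (induction r)
  case (Suc r)
  have "fact (K + Suc r) = (real K + real r + 1) * (fact (K + r) :: real)"
    by (simp add: algebra_simps)
  also have "\<dots> \<le> (real K + real r + 1) * (fact K * (real K + real r) ^ r)"
    using Suc.IH by (rule mult_left_mono) simp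
  also have "\<dots> \<le> (real K + real r + 1) * (fact K * (real K + real (Suc r)) ^ r)"
    by (intro mult_left_mono power_mono) auto
  also have "\<dots> = fact K * (real K + real (Suc r)) ^ Suc r"
    by (simp add: algebra_simps)
  finally show ?case .
qed simp

lemma inverse_beta_nat_le: "1 / beta_nat K r \<le> (real K + real r + 1) ^ (r + 1)"
proof -
  have "1 / beta_nat K r = fact (K + (r + 1)) / (fact K * fact r)"
    by (simp add: beta_nat_def)
  also have "\<dots> \<le> fact (K + (r + 1)) / fact K"
    by (rule divide_left_mono) auto
  also have "\<dots> \<le> (real K + real r + 1) ^ (r + 1)"
    using fact_add_le[of K "r + 1"] by (simp add: field_simps)
  finally show ?thesis .
qed

lemma norm_prod_power_diff_le:
  fixes a b :: "nat \<Rightarrow> complex"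
  assumes "finite A" "1 \<le> R"
    and "\<And>i. i \<in> A \<Longrightarrow> norm (a i) \<le> R" "\<And>i. i \<in> A \<Longrightarrow> norm (b i) \<le> R"
  shows "norm ((\<Prod>i\<in>A. a i ^ m i) - (\<Prod>i\<in>A. b i ^ m i))
           \<le> R ^ (\<Sum>i\<in>A. m i) * (\<Sum>i\<in>A. real (m i) * norm (a i - b i))"
proof -
  have R: "0 < R" using assms(2) by simp
  have scale: "(\<Prod>i\<in>A. x i ^ m i) = of_real R ^ (\<Sum>i\<in>A. m i) * (\<Prod>i\<in>A. (x i / of_real R) ^ m i)"
    for x :: "nat \<Rightarrow> complex"
    using R by (simp add: power_sum power_divide prod.distrib[symmetric])
  have "norm ((\<Prod>i\<in>A. a i ^ m i) - (\<Prod>i\<in>A. b i ^ m i))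
        = R ^ (\<Sum>i\<in>A. m i) * norm ((\<Prod>i\<in>A. (a i / of_real R) ^ m i) - (\<Prod>i\<in>A. (b i / of_real R) ^ m i))"
    using R unfolding scale[of a] scale[of b] right_diff_distrib[symmetric]
    by (simp add: norm_mult norm_power)
  also have "\<dots> \<le> R ^ (\<Sum>i\<in>A. m i) * (\<Sum>i\<in>A. norm ((a i / of_real R) ^ m i - (b i / of_real R) ^ m i))"
    using assms R
    by (intro mult_left_mono norm_prod_diff) (auto simp: norm_power norm_divide intro!: power_le_one)
  also have "\<dots> \<le> R ^ (\<Sum>i\<in>A. m i) * (\<Sum>i\<in>A. real (m i) * norm (a i - b i))"
  proof (intro mult_left_mono sum_mono)
    fix i assume i: "i \<in> A"
    have "norm ((a i / of_real R) ^ m i - (b i / of_real R) ^ m i)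
            \<le> real (m i) * norm (a i / of_real R - b i / of_real R)"
      using assms i R by (intro norm_power_diff) (auto simp: norm_divide)
    also have "\<dots> = real (m i) * (norm (a i - b i) / R)"
      using R by (simp add: diff_divide_distrib[symmetric] norm_divide)
    also have "\<dots> \<le> real (m i) * norm (a i - b i)"
      using assms(2) R by (intro mult_left_mono) (auto simp: divide_le_eq mult_le_cancel_left1)
    finally show "norm ((a i / of_real R) ^ m i - (b i / of_real R) ^ m i) \<le> real (m i) * norm (a i - b i)" .
  qed (use R in auto)
  finally show ?thesis .
qed

lemma Ln_lipschitz_near_1:
  assumes "norm (u - 1) < 1/2" "norm (v - 1) < 1/2"
  shows "norm (Ln u - Ln v) \<le> 2 * norm (u - v)"
proof (rule field_differentiable_bound[where S = "ball 1 (1/2)" and f' = inverse])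
  fix z :: complex assume "z \<in> ball 1 (1/2)"
  then have z: "norm (z - 1) < 1/2" by (simp add: dist_norm norm_minus_commute)
  have "\<bar>Re z - 1\<bar> < 1/2" using z abs_Re_le_cmod[of "z - 1"] by simp
  then have "0 < Re z" by linarith
  then show "(Ln has_field_derivative inverse z) (at z within ball 1 (1/2))"
    by (intro has_field_derivative_at_within[OF has_field_derivative_Ln])
       (simp add: complex_nonpos_Reals_iff)
  have "1 \<le> norm z + norm (1 - z)" using norm_triangle_ineq[of z "1 - z"] by simp
  then have "1/2 \<le> norm z" using z by (simp add: norm_minus_commute)
  then have "inverse (norm z) \<le> inverse (1/2)"
    by (rule le_imp_inverse_le) simp
  then show "norm (inverse z) \<le> 2" by (simp add: norm_inverse)
qed (use assms in \<open>auto simp: dist_norm norm_minus_commute\<close>)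

lemma exp_lipschitz_unit_disc:
  fixes x y :: complex
  assumes "norm x \<le> 1" "norm y \<le> 1"
  shows "norm (exp x - exp y) \<le> 3 * norm (x - y)"
proof (rule field_differentiable_bound[where S = "cball 0 1" and f' = exp])
  fix z :: complex assume "z \<in> cball 0 1"
  then have "Re z \<le> 1" using abs_Re_le_cmod[of z] by auto
  then have "exp (Re z) \<le> 3" using exp_le by (meson exp_le_cancel_iff order.trans)
  then show "norm (exp z) \<le> 3" by simp
qed (use assms in \<open>auto intro: has_field_derivative_at_within[OF DERIV_exp]\<close>)

lemma norm_Ln_le:
  fixes z :: complex
  assumes "z \<noteq> 0"
  shows "norm (Ln z) \<le> \<bar>ln (norm z)\<bar> + pi"
  using cmod_le[of "Ln z"] mpi_less_Im_Ln[OF assms] Im_Ln_le_pi[OF assms] Re_Ln[OF assms]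
  by linarith

lemma eventually_ln_over_le:
  assumes "0 < \<epsilon>"
  shows "\<forall>\<^sub>F K in sequentially. (a * ln (real (K + k) + 1) + c) / real (K + k) \<le> \<epsilon>"
proof -
  have "((\<lambda>n::nat. a * (ln (real n + 1) / real n) + c * (1 / real n)) \<longlongrightarrow> a * 0 + c * 0) sequentially"
    by (intro tendsto_intros; real_asymp)
  then have "((\<lambda>n::nat. (a * ln (real n + 1) + c) / real n) \<longlongrightarrow> 0) sequentially"
    by (simp add: add_divide_distrib)
  then have "((\<lambda>K. (a * ln (real (K + k) + 1) + c) / real (K + k)) \<longlongrightarrow> 0) sequentially"
    by (rule LIMSEQ_ignore_initial_segment)
  from order_tendstoD(2)[OF this assms] show ?thesis
    by (rule eventually_mono) (rule less_imp_le)
qed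

definition cofactor ::
    "nat set \<Rightarrow> (nat \<Rightarrow> nat) \<Rightarrow> (nat \<Rightarrow> complex) \<Rightarrow> nat \<Rightarrow> real \<Rightarrow> complex" where
  "cofactor I m c j s = (\<Prod>i\<in>I - {j}. (c j * of_real s - c i) ^ m i)"

definition beta_moment ::
    "nat \<Rightarrow> nat set \<Rightarrow> (nat \<Rightarrow> nat) \<Rightarrow> (nat \<Rightarrow> complex) \<Rightarrow> nat \<Rightarrow> complex" where
  "beta_moment K I m c j =
     integral {0..1} (\<lambda>s. of_real (beta_weight K (m j) s) * cofactor I m c j s)"

lemma continuous_on_cofactor: "continuous_on S (cofactor I m c j)"
  unfolding cofactor_def by (intro continuous_intros)

lemma integrable_beta_weight_cofactor:
  "(\<lambda>s. of_real (beta_weight K r s) * cofactor I m c j s) integrable_on {0..1}"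
  by (intro integrable_continuous_interval continuous_intros continuous_on_cofactor
        continuous_on_beta_weight)

lemma poly_antiderivative_at:
  assumes P': "pderiv P = prescribed_pderiv K I m c" and P0: "poly P 0 = 0"
    and j: "finite I" "j \<in> I"
  shows "poly P (c j) = c j ^ (K + m j + 1) * (-1) ^ m j * beta_moment K I m c j"
proof -
  have "poly (pderiv P) (c j * of_real s)
          = c j ^ (K + m j) * (-1) ^ m j * (of_real (beta_weight K (m j) s) * cofactor I m c j s)"
    for s
  proof -
    have "c j * of_real s - c j = c j * (-1) * of_real (1 - s)"
      by (simp add: algebra_simps)
    then have "(c j * of_real s - c j) ^ m j = c j ^ m j * (-1) ^ m j * of_real (1 - s) ^ m j"
      by (simp only: power_mult_distrib)
    moreover have "(\<Prod>i\<in>I. (c j * of_real s - c i) ^ m i)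
                     = (c j * of_real s - c j) ^ m j * cofactor I m c j s"
      using j by (simp add: cofactor_def prod.remove)
    ultimately show ?thesis
      by (simp only: P' poly_prescribed_pderiv beta_weight_def of_real_mult of_real_power
            power_add power_mult_distrib mult_ac)
  qed
  then have "poly P (c j) = c j * integral {0..1}
      (\<lambda>s. c j ^ (K + m j) * (-1) ^ m j * (of_real (beta_weight K (m j) s) * cofactor I m c j s))"
    using poly_diff_eq_integral_pderiv[of P "c j"] P0 by simp
  then show ?thesis
    by (simp add: beta_moment_def)
qed

lemma norm_cofactor_diff_le:
  assumes I: "finite I" "j \<in> I"
    and c: "\<And>i. i \<in> I \<Longrightarrow> norm (c i) \<le> 3/2" and c': "\<And>i. i \<in> I \<Longrightarrow> norm (c' i) \<le> 3/2"
    and s: "s \<in> {0..1}" "s' \<in> {0..1}" and "0 \<le> e"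
    and e: "\<And>i. i \<in> I - {j} \<Longrightarrow> norm ((c j * of_real s - c i) - (c' j * of_real s' - c' i)) \<le> e"
  shows "norm (cofactor I m c j s - cofactor I m c' j s') \<le> 3 ^ (\<Sum>i\<in>I. m i) * real (\<Sum>i\<in>I. m i) * e"
proof -
  have factor_le: "norm (x j * of_real t - x i) \<le> 3"
    if "i \<in> I" "\<And>i. i \<in> I \<Longrightarrow> norm (x i) \<le> 3/2" "t \<in> {0..1}" for x :: "nat \<Rightarrow> complex" and i t
  proof -
    have "norm (x j * of_real t - x i) \<le> norm (x j) * \<bar>t\<bar> + norm (x i)"
      by (metis norm_triangle_ineq4 norm_mult norm_of_real)
    also have "\<dots> \<le> 3/2 * 1 + 3/2"
      using that I by (intro add_mono mult_mono) auto
    finally show ?thesis by simp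
  qed
  have sub: "(\<Sum>i\<in>I - {j}. real (m i)) \<le> (\<Sum>i\<in>I. real (m i))"
    using I by (intro sum_mono2) auto
  have "norm (cofactor I m c j s - cofactor I m c' j s')
        \<le> 3 ^ (\<Sum>i\<in>I - {j}. m i) * (\<Sum>i\<in>I - {j}. real (m i) *
             norm ((c j * of_real s - c i) - (c' j * of_real s' - c' i)))"
    unfolding cofactor_def using I c c' s by (intro norm_prod_power_diff_le) (auto intro!: factor_le)
  also have "\<dots> \<le> 3 ^ (\<Sum>i\<in>I - {j}. m i) * ((\<Sum>i\<in>I - {j}. real (m i)) * e)"
    unfolding sum_distrib_right using e by (intro mult_left_mono sum_mono) auto
  also have "\<dots> \<le> 3 ^ (\<Sum>i\<in>I. m i) * ((\<Sum>i\<in>I. real (m i)) * e)"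
    using I sub \<open>0 \<le> e\<close>
    by (intro mult_mono power_increasing sum_mono2 mult_right_mono)
       (auto intro!: sum_nonneg mult_nonneg_nonneg)
  finally show ?thesis by (simp add: mult.assoc)
qed

lemma norm_beta_moment_approx:
  assumes I: "finite I" "j \<in> I" and c: "\<And>i. i \<in> I \<Longrightarrow> norm (c i) \<le> 3/2"
  shows "norm (beta_moment K I m c j - of_real (beta_nat K (m j)) * cofactor I m c j 1)
           \<le> 2 * 3 ^ (\<Sum>i\<in>I. m i) * real (\<Sum>i\<in>I. m i) * beta_nat K (Suc (m j))"
    (is "_ \<le> ?C * _")
proof -
  let ?w = "\<lambda>s. of_real (beta_weight K (m j) s) :: complex"
  have "(?w has_integral of_real (beta_nat K (m j))) {0..1}"
    using has_integral_linear[OF has_integral_beta_weight bounded_linear_of_real] by (simp add: o_def)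
  then have const: "((\<lambda>s. ?w s * cofactor I m c j 1) has_integral
                      of_real (beta_nat K (m j)) * cofactor I m c j 1) {0..1}"
    by (rule has_integral_mult_left)
  have diff: "beta_moment K I m c j - of_real (beta_nat K (m j)) * cofactor I m c j 1
      = integral {0..1} (\<lambda>s. ?w s * cofactor I m c j s - ?w s * cofactor I m c j 1)"
    unfolding beta_moment_def integral_unique[OF const, symmetric]
    by (rule integral_diff[symmetric, OF integrable_beta_weight_cofactor has_integral_integrable[OF const]])
  have pointwise: "norm (?w s * cofactor I m c j s - ?w s * cofactor I m c j 1)
                     \<le> ?C * beta_weight K (Suc (m j)) s"
    if s: "s \<in> {0..1}" for s
  proof -
    have "norm (cofactor I m c j s - cofactor I m c j 1)
            \<le> 3 ^ (\<Sum>i\<in>I. m i) * real (\<Sum>i\<in>I. m i) * (2 * (1 - s))"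
    proof (rule norm_cofactor_diff_le[OF I c c])
      fix i
      have "(c j * of_real s - c i) - (c j * of_real 1 - c i) = c j * of_real (s - 1)"
        by (simp add: algebra_simps)
      then have "norm ((c j * of_real s - c i) - (c j * of_real 1 - c i)) = norm (c j) * \<bar>s - 1\<bar>"
        by (simp only: norm_mult norm_of_real)
      also have "\<dots> = norm (c j) * (1 - s)"
        using s by simp
      also have "\<dots> \<le> 2 * (1 - s)"
        using c[OF I(2)] s by (intro mult_right_mono) auto
      finally show "norm ((c j * of_real s - c i) - (c j * of_real 1 - c i)) \<le> 2 * (1 - s)" .
    qed (use s in auto)
    then have "beta_weight K (m j) s * norm (cofactor I m c j s - cofactor I m c j 1)
                 \<le> beta_weight K (m j) s * (3 ^ (\<Sum>i\<in>I. m i) * real (\<Sum>i\<in>I. m i) * (2 * (1 - s)))"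
      by (rule mult_left_mono) (rule beta_weight_nonneg[OF s])
    also have "\<dots> = ?C * beta_weight K (Suc (m j)) s"
      by (simp add: beta_weight_Suc)
    finally show ?thesis
      using beta_weight_nonneg[OF s, of K "m j"] by (simp add: norm_mult flip: right_diff_distrib)
  qed
  have bound: "((\<lambda>s. ?C * beta_weight K (Suc (m j)) s) has_integral ?C * beta_nat K (Suc (m j))) {0..1}"
    by (intro has_integral_mult_right has_integral_beta_weight)
  have "norm (integral {0..1} (\<lambda>s. ?w s * cofactor I m c j s - ?w s * cofactor I m c j 1))
          \<le> integral {0..1} (\<lambda>s. ?C * beta_weight K (Suc (m j)) s)"
    by (rule integral_norm_bound_integral[OF integrable_diff[OF integrable_beta_weight_cofactor
          has_integral_integrable[OF const]] has_integral_integrable[OF bound]]) (use pointwise in auto)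
  then show ?thesis
    unfolding diff integral_unique[OF bound] .
qed

lemma norm_beta_moment_diff_le:
  assumes I: "finite I" "j \<in> I"
    and c: "\<And>i. i \<in> I \<Longrightarrow> norm (c i) \<le> 3/2" and c': "\<And>i. i \<in> I \<Longrightarrow> norm (c' i) \<le> 3/2"
    and e: "\<And>i. i \<in> I \<Longrightarrow> norm (c i - c' i) \<le> e"
  shows "norm (beta_moment K I m c j - beta_moment K I m c' j)
           \<le> beta_nat K (m j) * (2 * 3 ^ (\<Sum>i\<in>I. m i) * real (\<Sum>i\<in>I. m i) * e)"
    (is "_ \<le> _ * ?Ce")
proof -
  let ?w = "\<lambda>s. of_real (beta_weight K (m j) s) :: complex"
  have e0: "0 \<le> e" using e[OF I(2)] norm_ge_zero order_trans by blast
  have pointwise: "norm (?w s * cofactor I m c j s - ?w s * cofactor I m c' j s)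
                     \<le> beta_weight K (m j) s * ?Ce"
    if s: "s \<in> {0..1}" for s
  proof -
    have "norm (cofactor I m c j s - cofactor I m c' j s)
            \<le> 3 ^ (\<Sum>i\<in>I. m i) * real (\<Sum>i\<in>I. m i) * (2 * e)"
    proof (rule norm_cofactor_diff_le[OF I c c'])
      fix i assume i: "i \<in> I - {j}"
      have "(c j * of_real s - c i) - (c' j * of_real s - c' i) = (c j - c' j) * of_real s - (c i - c' i)"
        by (simp add: algebra_simps)
      then have "norm ((c j * of_real s - c i) - (c' j * of_real s - c' i))
              \<le> norm (c j - c' j) * \<bar>s\<bar> + norm (c i - c' i)"
        by (metis norm_mult norm_of_real norm_triangle_ineq4)
      also have "\<dots> \<le> e * 1 + e"
        using e[OF I(2)] e[of i] i s e0 by (intro add_mono mult_mono) auto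
      finally show "norm ((c j * of_real s - c i) - (c' j * of_real s - c' i)) \<le> 2 * e" by simp
    qed (use s e0 in auto)
    then have "beta_weight K (m j) s * norm (cofactor I m c j s - cofactor I m c' j s)
                 \<le> beta_weight K (m j) s * (3 ^ (\<Sum>i\<in>I. m i) * real (\<Sum>i\<in>I. m i) * (2 * e))"
      by (rule mult_left_mono) (rule beta_weight_nonneg[OF s])
    then show ?thesis
      using beta_weight_nonneg[OF s, of K "m j"]
      by (simp add: norm_mult mult_ac flip: right_diff_distrib)
  qed
  have bound: "((\<lambda>s. beta_weight K (m j) s * ?Ce) has_integral beta_nat K (m j) * ?Ce) {0..1}"
    by (intro has_integral_mult_left has_integral_beta_weight)
  have "norm (integral {0..1} (\<lambda>s. ?w s * cofactor I m c j s - ?w s * cofactor I m c' j s))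
          \<le> integral {0..1} (\<lambda>s. beta_weight K (m j) s * ?Ce)"
    by (rule integral_norm_bound_integral[OF integrable_diff[OF integrable_beta_weight_cofactor
          integrable_beta_weight_cofactor] has_integral_integrable[OF bound]]) (use pointwise in auto)
  then show ?thesis
    unfolding beta_moment_def integral_unique[OF bound]
      integral_diff[OF integrable_beta_weight_cofactor integrable_beta_weight_cofactor, symmetric] .
qed

lemma convergent_if_summable_diff:
  fixes x :: "nat \<Rightarrow> 'a::banach"
  assumes "summable (\<lambda>k. x (Suc k) - x k)"
  shows "convergent x"
proof -
  have "convergent (\<lambda>k. \<Sum>i<k. x (Suc i) - x i)"
    using assms by (simp add: summable_iff_convergent)
  then have "convergent (\<lambda>k. (x k - x 0) + x 0)"
    by (intro convergent_add convergent_const) (simp add: sum_lessThan_telescope)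
  then show ?thesis by simp
qed

lemma contraction_limit_is_fixed:
  fixes T :: "(nat \<Rightarrow> complex) \<Rightarrow> nat \<Rightarrow> complex"
  assumes I: "finite I" "j \<in> I" and lim: "\<And>i. i \<in> I \<Longrightarrow> (\<lambda>k. x k i) \<longlonglongrightarrow> L i"
    and x_Suc: "\<And>k. x (Suc k) = T (x k)"
    and contracts: "\<And>k. (\<Sum>i\<in>I. norm (T L i - T (x k) i)) \<le> 1/2 * (\<Sum>i\<in>I. norm (L i - x k i))"
  shows "T L j = L j"
proof -
  have "(\<lambda>k. 1/2 * (\<Sum>i\<in>I. norm (L i - x k i))) \<longlonglongrightarrow> 1/2 * (\<Sum>i\<in>I. norm (L i - L i))"
    by (intro tendsto_intros lim)
  then have small: "(\<lambda>k. 1/2 * (\<Sum>i\<in>I. norm (L i - x k i))) \<longlonglongrightarrow> 0"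
    by simp
  have bound: "norm (T L j - x (Suc k) j) \<le> 1/2 * (\<Sum>i\<in>I. norm (L i - x k i))" for k
    using member_le_sum[of j I "\<lambda>i. norm (T L i - T (x k) i)"] I contracts[of k] by (simp add: x_Suc)
  have "(\<lambda>k. norm (T L j - x (Suc k) j)) \<longlonglongrightarrow> 0"
    by (intro tendsto_sandwich[OF _ _ tendsto_const small] always_eventually allI bound norm_ge_zero)
  then have "(\<lambda>k. T L j - (T L j - x (Suc k) j)) \<longlonglongrightarrow> T L j - 0"
    by (intro tendsto_diff tendsto_const) (simp add: tendsto_norm_zero_iff)
  then have "(\<lambda>k. x (Suc k) j) \<longlonglongrightarrow> T L j"
    by simp
  moreover have "(\<lambda>k. x (Suc k) j) \<longlonglongrightarrow> L j"
    using lim[OF I(2)] by (rule LIMSEQ_Suc)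
  ultimately show ?thesis
    by (rule LIMSEQ_unique)
qed

lemma contraction_fixed_point:
  fixes T :: "(nat \<Rightarrow> complex) \<Rightarrow> nat \<Rightarrow> complex" and q :: "nat \<Rightarrow> complex"
    and I :: "nat set" and \<rho> :: real
  defines "near \<equiv> \<lambda>c. \<forall>j\<in>I. norm (c j - q j) \<le> \<rho>"
  assumes I: "finite I" and "0 \<le> \<rho>"
    and maps: "\<And>c. near c \<Longrightarrow> near (T c)"
    and contracts: "\<And>c c'. near c \<Longrightarrow> near c' \<Longrightarrow>
          (\<Sum>j\<in>I. norm (T c j - T c' j)) \<le> 1/2 * (\<Sum>j\<in>I. norm (c j - c' j))"
  shows "\<exists>c. near c \<and> (\<forall>j\<in>I. T c j = c j)"
proof -
  define x where "x k = (T ^^ k) q" for k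
  have x_Suc: "x (Suc k) = T (x k)" for k
    by (simp add: x_def)
  have x_near: "near (x k)" for k
  proof (induction k)
    case 0
    show ?case using \<open>0 \<le> \<rho>\<close> by (simp add: x_def near_def)
  next
    case (Suc k)
    show ?case unfolding x_Suc by (rule maps[OF Suc.IH])
  qed
  define d where "d k = (\<Sum>j\<in>I. norm (x (Suc k) j - x k j))" for k
  have d_le: "d k \<le> d 0 * (1/2) ^ k" for k
  proof (induction k)
    case (Suc k)
    have "d (Suc k) \<le> 1/2 * d k"
      unfolding d_def x_Suc[of "Suc k"] x_Suc[of k]
      by (intro contracts x_near[of k] x_near[of "Suc k", unfolded x_Suc])
    with Suc.IH show ?case by simp
  qed simp
  have "convergent (\<lambda>k. x k j)" if j: "j \<in> I" for j
  proof (rule convergent_if_summable_diff, rule summable_comparison_test)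
    have "norm (x (Suc k) j - x k j) \<le> d k" for k
      using member_le_sum[of j I "\<lambda>j. norm (x (Suc k) j - x k j)"] j I by (simp add: d_def)
    then show "\<exists>N. \<forall>k\<ge>N. norm (x (Suc k) j - x k j) \<le> d 0 * (1/2) ^ k"
      using d_le order_trans by blast
  qed (intro summable_mult summable_geometric, simp)
  then obtain L where L: "\<And>j. j \<in> I \<Longrightarrow> (\<lambda>k. x k j) \<longlonglongrightarrow> L j"
    unfolding convergent_def by metis
  have L_near: "near L"
    unfolding near_def
  proof
    fix j assume j: "j \<in> I"
    have "(\<lambda>k. norm (x k j - q j)) \<longlonglongrightarrow> norm (L j - q j)"
      by (intro tendsto_intros L[OF j])
    then show "norm (L j - q j) \<le> \<rho>"
      using x_near j by (intro LIMSEQ_le_const2) (auto simp: near_def)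
  qed
  have "T L j = L j" if "j \<in> I" for j
    by (rule contraction_limit_is_fixed[OF I that L x_Suc contracts[OF L_near x_near]])
  with L_near show ?thesis by blast
qed

locale circle_configuration =
  fixes I :: "nat set" and m :: "nat \<Rightarrow> nat" and q :: "nat \<Rightarrow> complex"
  assumes finite_I: "finite I" and nonempty_I: "I \<noteq> {}" and m_pos: "\<And>i. i \<in> I \<Longrightarrow> 0 < m i"
    and norm_q: "\<And>i. norm (q i) = 1" and inj_q: "inj_on q I"
begin

definition lip :: real where
  "lip = 2 * 3 ^ (\<Sum>i\<in>I. m i) * real (\<Sum>i\<in>I. m i)"

definition base_cofactor :: "nat \<Rightarrow> complex" where
  "base_cofactor j = cofactor I m q j 1"

definition min_cofactor :: real where
  "min_cofactor = Min ((\<lambda>j. norm (base_cofactor j)) ` I)"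

definition radius :: real where
  "radius = min (1/2) (min_cofactor / (8 * lip))"

definition near :: "(nat \<Rightarrow> complex) \<Rightarrow> bool" where
  "near c \<longleftrightarrow> (\<forall>i\<in>I. norm (c i - q i) \<le> radius)"

lemma lip_pos: "0 < lip"
proof -
  obtain i where i: "i \<in> I" using nonempty_I by blast
  have "0 < m i" using m_pos[OF i] .
  also have "m i \<le> (\<Sum>i\<in>I. m i)" using finite_I i by (intro member_le_sum) auto
  finally show ?thesis by (simp add: lip_def del: of_nat_sum)
qed

lemma base_cofactor_nonzero: "j \<in> I \<Longrightarrow> base_cofactor j \<noteq> 0"
  using inj_q finite_I by (auto simp: base_cofactor_def cofactor_def inj_on_def)

lemma min_cofactor_le: "j \<in> I \<Longrightarrow> min_cofactor \<le> norm (base_cofactor j)"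
  unfolding min_cofactor_def using finite_I by (intro Min_le) auto

lemma min_cofactor_pos: "0 < min_cofactor"
  unfolding min_cofactor_def using finite_I nonempty_I base_cofactor_nonzero by (subst Min_gr_iff) auto

lemma radius_pos: "0 < radius"
  using min_cofactor_pos lip_pos by (simp add: radius_def)

lemma radius_le_half: "radius \<le> 1/2"
  by (simp add: radius_def)

lemma lip_radius_le: "lip * radius \<le> min_cofactor / 8"
proof -
  have "lip * radius \<le> lip * (min_cofactor / (8 * lip))"
    using lip_pos by (intro mult_left_mono) (auto simp: radius_def)
  then show ?thesis using lip_pos by simp
qed

lemma near_norm_le: "near c \<Longrightarrow> i \<in> I \<Longrightarrow> norm (c i) \<le> 3/2"
  using norm_triangle_ineq[of "c i - q i" "q i"] norm_q[of i] radius_le_half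
  by (auto simp: near_def)

lemma near_nonzero: "near c \<Longrightarrow> i \<in> I \<Longrightarrow> c i \<noteq> 0"
  using norm_q[of i] radius_le_half by (auto simp: near_def)

lemma norm_cofactor_near_le:
  assumes "near c" "j \<in> I"
  shows "norm (cofactor I m c j 1 - base_cofactor j) \<le> min_cofactor / 8"
proof -
  have "norm (cofactor I m c j 1 - cofactor I m q j 1) \<le> 3 ^ (\<Sum>i\<in>I. m i) * real (\<Sum>i\<in>I. m i) * (2 * radius)"
  proof (rule norm_cofactor_diff_le[OF finite_I \<open>j \<in> I\<close>])
    fix i assume "i \<in> I - {j}"
    have "norm ((c j * of_real 1 - c i) - (q j * of_real 1 - q i)) = norm ((c j - q j) - (c i - q i))"
      by (simp add: algebra_simps)
    also have "\<dots> \<le> norm (c j - q j) + norm (c i - q i)"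
      by (rule norm_triangle_ineq4)
    also have "\<dots> \<le> radius + radius"
      using assms \<open>i \<in> I - {j}\<close> by (intro add_mono) (auto simp: near_def)
    finally show "norm ((c j * of_real 1 - c i) - (q j * of_real 1 - q i)) \<le> 2 * radius"
      by simp
  qed (use assms near_norm_le norm_q radius_pos in auto)
  also have "\<dots> = lip * radius"
    by (simp add: lip_def)
  finally show ?thesis
    using lip_radius_le by (simp add: base_cofactor_def)
qed

lemma near_inj: "near c \<Longrightarrow> inj_on c I"
proof (rule inj_onI, rule ccontr)
  fix i j assume c: "near c" and ij: "i \<in> I" "j \<in> I" "c i = c j" "i \<noteq> j"
  then have "cofactor I m c j 1 = 0"
    using finite_I m_pos[of i] by (auto simp: cofactor_def intro!: prod_zero bexI[of _ i])
  then have "norm (base_cofactor j) \<le> min_cofactor / 8"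
    using norm_cofactor_near_le[OF c ij(2)] by (simp add: norm_minus_commute)
  then show False
    using min_cofactor_le[OF ij(2)] min_cofactor_pos by simp
qed

text \<open>With N = K + m j, the equation for c j reads c j ^ N = target K j / ratio K c j, where
  ratio K c j is close to 1. The map step takes the N-th root of target K j closest to q j and
  multiplies it by the principal N-th root of 1 / ratio K c j.\<close>

definition ratio :: "nat \<Rightarrow> (nat \<Rightarrow> complex) \<Rightarrow> nat \<Rightarrow> complex" where
  "ratio K c j = beta_moment K I m c j / (of_real (beta_nat K (m j)) * base_cofactor j)"

definition target :: "nat \<Rightarrow> nat \<Rightarrow> complex" where
  "target K j = (-1) ^ m j / (of_real (beta_nat K (m j)) * base_cofactor j)"

definition base_root :: "nat \<Rightarrow> nat \<Rightarrow> complex" where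
  "base_root K j = q j * exp (Ln (target K j / q j ^ (K + m j)) / of_nat (K + m j))"

definition step :: "nat \<Rightarrow> (nat \<Rightarrow> complex) \<Rightarrow> nat \<Rightarrow> complex" where
  "step K c j = (if j \<in> I then base_root K j * exp (- Ln (ratio K c j) / of_nat (K + m j)) else 0)"

definition large :: "nat \<Rightarrow> bool" where
  "large K \<longleftrightarrow> (\<forall>j\<in>I.
      lip * (real (m j) + 1) / real (K + m j) \<le> min_cofactor / 8 \<and>
      6 / real (K + m j) \<le> radius \<and>
      norm (Ln (target K j / q j ^ (K + m j))) / real (K + m j) \<le> min 1 (radius / 6) \<and>
      24 * lip * real (card I) / min_cofactor / real (K + m j) \<le> 1)"

lemma norm_Ln_target_le:
  assumes j: "j \<in> I"
  shows "norm (Ln (target K j / q j ^ (K + m j)))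
           \<le> (real (m j) + 1) * ln (real (K + m j) + 1) + (\<bar>ln (norm (base_cofactor j))\<bar> + pi)"
proof -
  let ?B = "beta_nat K (m j)" and ?N = "real (K + m j)"
  have B: "0 < ?B" "?B \<le> 1" by (simp_all add: beta_nat_pos beta_nat_le_1)
  have "1 / ?B \<le> (?N + 1) ^ (m j + 1)"
    using inverse_beta_nat_le[of K "m j"] by simp
  then have "ln (1 / ?B) \<le> ln ((?N + 1) ^ (m j + 1))"
    using B by (subst ln_le_cancel_iff) auto
  also have "\<dots> = (real (m j) + 1) * ln (?N + 1)"
    by (subst ln_realpow) auto
  finally have ln_B: "0 \<le> - ln ?B" "- ln ?B \<le> (real (m j) + 1) * ln (?N + 1)"
    using B by (simp_all add: ln_div)
  have "base_cofactor j \<noteq> 0" by (rule base_cofactor_nonzero[OF j])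
  then have "ln (norm (target K j / q j ^ (K + m j))) = - ln ?B - ln (norm (base_cofactor j))"
    using B by (simp add: target_def norm_divide norm_mult norm_power norm_q ln_div ln_mult)
  with ln_B have "\<bar>ln (norm (target K j / q j ^ (K + m j)))\<bar>
                    \<le> (real (m j) + 1) * ln (?N + 1) + \<bar>ln (norm (base_cofactor j))\<bar>"
    by arith
  moreover have "target K j / q j ^ (K + m j) \<noteq> 0"
    using B \<open>base_cofactor j \<noteq> 0\<close> norm_q[of j] by (auto simp: target_def)
  ultimately show ?thesis
    using norm_Ln_le[of "target K j / q j ^ (K + m j)"] by simp
qed

lemma eventually_large: "\<forall>\<^sub>F K in sequentially. large K"
  unfolding large_def
proof (intro eventually_ball_finite finite_I ballI eventually_conj)
  fix j assume j: "j \<in> I"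
  let ?N = "\<lambda>K. real (K + m j)"
  show "\<forall>\<^sub>F K in sequentially. lip * (real (m j) + 1) / ?N K \<le> min_cofactor / 8"
    using eventually_ln_over_le[of "min_cofactor / 8" 0 "m j" "lip * (real (m j) + 1)"] min_cofactor_pos
    by simp
  show "\<forall>\<^sub>F K in sequentially. 6 / ?N K \<le> radius"
    using eventually_ln_over_le[of radius 0 "m j" 6] radius_pos by simp
  show "\<forall>\<^sub>F K in sequentially. 24 * lip * real (card I) / min_cofactor / ?N K \<le> 1"
    using eventually_ln_over_le[of 1 0 "m j" "24 * lip * real (card I) / min_cofactor"] by simp
  let ?C = "\<bar>ln (norm (base_cofactor j))\<bar> + pi"
  have bound: "norm (Ln (target K j / q j ^ (K + m j))) / ?N K
                 \<le> ((real (m j) + 1) * ln (?N K + 1) + ?C) / ?N K" for K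
    using norm_Ln_target_le[OF j] by (intro divide_right_mono) auto
  have "\<forall>\<^sub>F K in sequentially. ((real (m j) + 1) * ln (?N K + 1) + ?C) / ?N K \<le> min 1 (radius / 6)"
    using radius_pos by (intro eventually_ln_over_le) simp
  then show "\<forall>\<^sub>F K in sequentially.
      norm (Ln (target K j / q j ^ (K + m j))) / ?N K \<le> min 1 (radius / 6)"
    by (rule eventually_mono) (rule order_trans[OF bound])
qed

lemma norm_beta_moment_sub_le:
  assumes K: "large K" and c: "near c" and j: "j \<in> I"
  shows "norm (beta_moment K I m c j - of_real (beta_nat K (m j)) * base_cofactor j)
           \<le> beta_nat K (m j) * (min_cofactor / 4)"
proof -
  let ?B = "beta_nat K (m j)"
  have B: "0 < ?B" by (rule beta_nat_pos)
  have "lip * (real (m j) + 1) / (real K + real (m j) + 2) \<le> lip * (real (m j) + 1) / real (K + m j)"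
    using lip_pos m_pos[OF j] by (intro divide_left_mono) auto
  also have "\<dots> \<le> min_cofactor / 8"
    using K j by (simp add: large_def)
  finally have "?B * (lip * (real (m j) + 1) / (real K + real (m j) + 2)) \<le> ?B * (min_cofactor / 8)"
    using B by (intro mult_left_mono) auto
  moreover have "lip * beta_nat K (Suc (m j))
                   = ?B * (lip * (real (m j) + 1) / (real K + real (m j) + 2))"
    by (simp add: beta_nat_Suc field_simps)
  ultimately have "lip * beta_nat K (Suc (m j)) \<le> ?B * (min_cofactor / 8)"
    by simp
  then have "norm (beta_moment K I m c j - of_real ?B * cofactor I m c j 1) \<le> ?B * (min_cofactor / 8)"
    using norm_beta_moment_approx[OF finite_I j, of c K m] near_norm_le[OF c] by (simp add: lip_def)
  moreover have "norm (of_real ?B * cofactor I m c j 1 - of_real ?B * base_cofactor j)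
                   \<le> ?B * (min_cofactor / 8)"
    using norm_cofactor_near_le[OF c j] B by (simp add: norm_mult flip: right_diff_distrib)
  ultimately show ?thesis
    using norm_triangle_ineq[of "beta_moment K I m c j - of_real ?B * cofactor I m c j 1"
        "of_real ?B * cofactor I m c j 1 - of_real ?B * base_cofactor j"] by simp
qed

lemma ratio_near_1:
  assumes K: "large K" and c: "near c" and j: "j \<in> I"
  shows "norm (ratio K c j - 1) \<le> 1/4"
proof -
  let ?B = "beta_nat K (m j)"
  have B: "0 < ?B" by (rule beta_nat_pos)
  have "ratio K c j - 1
          = (beta_moment K I m c j - of_real ?B * base_cofactor j) / (of_real ?B * base_cofactor j)"
    using B base_cofactor_nonzero[OF j] by (simp add: ratio_def field_simps)
  then have "norm (ratio K c j - 1)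
               = norm (beta_moment K I m c j - of_real ?B * base_cofactor j) / (?B * norm (base_cofactor j))"
    using B by (simp add: norm_divide norm_mult)
  also have "\<dots> \<le> (?B * (min_cofactor / 4)) / (?B * min_cofactor)"
    using B min_cofactor_le[OF j] min_cofactor_pos norm_beta_moment_sub_le[OF K c j]
    by (intro frac_le mult_left_mono) auto
  finally show ?thesis
    using B min_cofactor_pos by simp
qed

lemma norm_ratio_diff_le:
  assumes c: "near c" "near c'" and j: "j \<in> I"
  shows "norm (ratio K c j - ratio K c' j) \<le> lip * (\<Sum>i\<in>I. norm (c i - c' i)) / min_cofactor"
proof -
  let ?B = "beta_nat K (m j)" and ?S = "\<Sum>i\<in>I. norm (c i - c' i)"
  have B: "0 < ?B" by (rule beta_nat_pos)
  have "norm (c i - c' i) \<le> ?S" if "i \<in> I" for i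
    using finite_I that by (intro member_le_sum) auto
  then have "norm (beta_moment K I m c j - beta_moment K I m c' j) \<le> ?B * (lip * ?S)"
    using norm_beta_moment_diff_le[where c = c and c' = c' and e = ?S and K = K and m = m,
        OF finite_I j near_norm_le[OF c(1)] near_norm_le[OF c(2)]]
    by (simp add: lip_def mult_ac)
  moreover have "ratio K c j - ratio K c' j
                   = (beta_moment K I m c j - beta_moment K I m c' j) / (of_real ?B * base_cofactor j)"
    by (simp add: ratio_def diff_divide_distrib)
  then have "norm (ratio K c j - ratio K c' j)
               = norm (beta_moment K I m c j - beta_moment K I m c' j) / (?B * norm (base_cofactor j))"
    using B by (simp add: norm_divide norm_mult)
  also have "\<dots> \<le> (?B * (lip * ?S)) / (?B * min_cofactor)"
    using B min_cofactor_le[OF j] min_cofactor_pos lip_pos \<open>norm (beta_moment K I m c j - _) \<le> _\<close>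
    by (intro frac_le mult_left_mono mult_nonneg_nonneg sum_nonneg) auto
  finally show ?thesis
    using B by simp
qed

lemma norm_Ln_ratio_le:
  assumes "large K" "near c" "j \<in> I"
  shows "norm (Ln (ratio K c j)) \<le> 1/2"
  using Ln_lipschitz_near_1[of "ratio K c j" 1] ratio_near_1[OF assms] by simp

lemma base_root_near:
  assumes K: "large K" and j: "j \<in> I"
  shows "norm (base_root K j - q j) \<le> radius / 2" and "norm (base_root K j) \<le> 2"
proof -
  define z where "z = Ln (target K j / q j ^ (K + m j)) / of_nat (K + m j)"
  have "norm z = norm (Ln (target K j / q j ^ (K + m j))) / real (K + m j)"
    unfolding z_def norm_divide norm_of_nat ..
  then have z: "norm z \<le> min 1 (radius / 6)"
    using K j by (simp only: large_def)
  have "base_root K j - q j = q j * (exp z - exp 0)"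
    by (simp add: base_root_def z_def algebra_simps)
  then have "norm (base_root K j - q j) = norm (exp z - exp 0)"
    by (simp add: norm_mult norm_q)
  also have "\<dots> \<le> 3 * norm (z - 0)"
    using z by (intro exp_lipschitz_unit_disc) auto
  finally show near: "norm (base_root K j - q j) \<le> radius / 2"
    using z by simp
  show "norm (base_root K j) \<le> 2"
    using norm_triangle_ineq[of "base_root K j - q j" "q j"] near norm_q[of j] radius_le_half by simp
qed

lemma step_near:
  assumes K: "large K" and c: "near c"
  shows "near (step K c)"
  unfolding near_def
proof
  fix j assume j: "j \<in> I"
  define N where "N = real (K + m j)"
  have N: "1 \<le> N" using m_pos[OF j] by (simp add: N_def)
  define x where "x = - Ln (ratio K c j) / of_nat (K + m j)"
  have norm_x: "norm x = norm (Ln (ratio K c j)) / N"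
    unfolding x_def N_def norm_divide norm_minus_cancel norm_of_nat ..
  have x: "norm x \<le> (1/2) / N"
    unfolding norm_x by (rule divide_right_mono[OF norm_Ln_ratio_le[OF K c j]]) (use N in simp)
  also have "\<dots> \<le> 1"
    using N by simp
  finally have "norm (exp x - exp 0) \<le> 3 * norm (x - 0)"
    by (intro exp_lipschitz_unit_disc) auto
  then have "norm (base_root K j) * norm (exp x - 1) \<le> 2 * (3 * ((1/2) / N))"
    using base_root_near(2)[OF K j] x by (intro mult_mono) auto
  also have "\<dots> = (6 / N) / 2"
    by simp
  also have "\<dots> \<le> radius / 2"
  proof (rule divide_right_mono)
    show "6 / N \<le> radius"
      using K j by (simp add: large_def N_def)
  qed simp
  finally have "norm (base_root K j * (exp x - 1)) + norm (base_root K j - q j) \<le> radius"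
    using base_root_near(1)[OF K j] by (simp add: norm_mult)
  moreover have "step K c j - q j = base_root K j * (exp x - 1) + (base_root K j - q j)"
    using j by (simp add: step_def x_def algebra_simps)
  ultimately show "norm (step K c j - q j) \<le> radius"
    by (metis norm_triangle_ineq order_trans)
qed

lemma norm_step_diff_le:
  assumes K: "large K" and c: "near c" "near c'" and j: "j \<in> I"
  shows "norm (step K c j - step K c' j) \<le> (\<Sum>i\<in>I. norm (c i - c' i)) / (2 * real (card I))"
proof -
  let ?S = "\<Sum>i\<in>I. norm (c i - c' i)"
  define N where "N = real (K + m j)"
  have N: "1 \<le> N" using m_pos[OF j] by (simp add: N_def)
  define x where "x d = - Ln (ratio K d j) / of_nat (K + m j)" for d
  have norm_x: "norm (x d) = norm (Ln (ratio K d j)) / N" for d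
    unfolding x_def N_def norm_divide norm_minus_cancel norm_of_nat ..
  have x: "norm (x d) \<le> 1" if "near d" for d
    using norm_Ln_ratio_le[OF K that j] N by (simp add: norm_x divide_le_eq)
  have "norm (step K c j - step K c' j) = norm (base_root K j) * norm (exp (x c) - exp (x c'))"
    using j by (simp add: step_def x_def norm_mult flip: right_diff_distrib)
  also have "\<dots> \<le> 2 * (3 * norm (x c - x c'))"
    using base_root_near(2)[OF K j] exp_lipschitz_unit_disc[OF x[OF c(1)] x[OF c(2)]]
    by (intro mult_mono) auto
  also have "norm (x c - x c') = norm (Ln (ratio K c j) - Ln (ratio K c' j)) / N"
    unfolding x_def N_def diff_divide_distrib[symmetric] norm_divide norm_of_nat
    by (simp add: norm_minus_commute)
  also have "norm (Ln (ratio K c j) - Ln (ratio K c' j)) \<le> 2 * norm (ratio K c j - ratio K c' j)"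
    using ratio_near_1[OF K c(1) j] ratio_near_1[OF K c(2) j] by (intro Ln_lipschitz_near_1) auto
  also have "norm (ratio K c j - ratio K c' j) \<le> lip * ?S / min_cofactor"
    by (rule norm_ratio_diff_le[OF c j])
  finally have "norm (step K c j - step K c' j) \<le> ?S * (12 * lip / min_cofactor / N)"
    using N by (simp add: divide_right_mono mult_ac)
  also have "\<dots> \<le> ?S * (1 / (2 * real (card I)))"
  proof (intro mult_left_mono sum_nonneg norm_ge_zero)
    have "24 * lip * real (card I) / min_cofactor / N \<le> 1"
      using K j by (simp add: large_def N_def)
    moreover have "0 < real (card I)"
      using finite_I j by (auto simp: card_gt_0_iff)
    ultimately show "12 * lip / min_cofactor / N \<le> 1 / (2 * real (card I))"
      using N min_cofactor_pos by (simp add: field_simps)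
  qed
  finally show ?thesis by simp
qed

lemma step_contracts:
  assumes K: "large K" and c: "near c" "near c'"
  shows "(\<Sum>j\<in>I. norm (step K c j - step K c' j)) \<le> 1/2 * (\<Sum>i\<in>I. norm (c i - c' i))"
proof -
  have "(\<Sum>j\<in>I. norm (step K c j - step K c' j))
          \<le> (\<Sum>j\<in>I. (\<Sum>i\<in>I. norm (c i - c' i)) / (2 * real (card I)))"
    by (intro sum_mono norm_step_diff_le[OF K c])
  also have "\<dots> = 1/2 * (\<Sum>i\<in>I. norm (c i - c' i))"
    using finite_I nonempty_I by simp
  finally show ?thesis .
qed

lemma step_fixed_point_solves:
  assumes K: "large K" and c: "near c" and j: "j \<in> I" and fixed: "step K c j = c j"
  shows "c j ^ (K + m j + 1) * (-1) ^ m j * beta_moment K I m c j = c j"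
proof -
  define N where "N = K + m j"
  have N: "N \<noteq> 0" using m_pos[OF j] by (simp add: N_def)
  have root_pow: "exp (z / of_nat N) ^ N = exp z" for z :: complex
    using N exp_of_nat_mult[of N "z / of_nat N"] by simp
  have u: "ratio K c j \<noteq> 0"
    using ratio_near_1[OF K c j] by auto
  have Bg: "of_real (beta_nat K (m j)) * base_cofactor j \<noteq> 0"
    using beta_nat_pos[of K "m j"] base_cofactor_nonzero[OF j] by simp
  have "target K j \<noteq> 0" "q j ^ N \<noteq> 0"
    using Bg norm_q[of j] by (auto simp: target_def)
  then have base_root_pow: "base_root K j ^ N = target K j"
    unfolding base_root_def N_def[symmetric] power_mult_distrib root_pow by (simp add: exp_Ln)
  have "c j = base_root K j * exp (- Ln (ratio K c j) / of_nat N)"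
    using fixed j by (simp add: step_def N_def)
  then have "c j ^ N = target K j * exp (- Ln (ratio K c j))"
    by (simp only: power_mult_distrib base_root_pow root_pow)
  also have "\<dots> = target K j / ratio K c j"
    using u by (simp add: exp_minus exp_Ln divide_inverse)
  finally have "c j ^ N = target K j / ratio K c j" .
  then have "c j ^ N * beta_moment K I m c j = (-1) ^ m j"
    using Bg u by (simp add: target_def ratio_def field_simps)
  then have "c j ^ N * (-1) ^ m j * beta_moment K I m c j = 1"
    by (metis (no_types, lifting) mult.assoc mult.commute neg_one_even_power even_add power_add
          power_minus1_even)
  moreover have "c j ^ (K + m j + 1) = c j * c j ^ N"
    by (simp add: N_def)
  ultimately show ?thesis
    by (simp add: N_def mult.assoc)
qed

lemma exists_solution:
  "\<exists>K c. inj_on c I \<and> (\<forall>j\<in>I. c j \<noteq> 0) \<and>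
     (\<forall>j\<in>I. c j ^ (K + m j + 1) * (-1) ^ m j * beta_moment K I m c j = c j)"
proof -
  obtain K where K: "large K"
    using eventually_large by (auto simp: eventually_sequentially)
  obtain c where c: "near c" and fixed: "\<And>j. j \<in> I \<Longrightarrow> step K c j = c j"
    using contraction_fixed_point[where T = "step K" and q = q and I = I and \<rho> = radius]
      finite_I radius_pos step_near[OF K] step_contracts[OF K]
    unfolding near_def by auto
  show ?thesis
    using near_inj[OF c] near_nonzero[OF c] step_fixed_point_solves[OF K c _ fixed] by blast
qed

end

lemma inj_on_cis_inverse: "inj_on (\<lambda>j. cis (1 / real j)) {1..}"
proof (rule inj_onI)
  have angle: "0 \<le> 1 / real k \<and> 1 / real k \<le> pi" if "k \<in> {1..}" for k :: nat
  proof -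
    have "1 / real k \<le> 1" using that by simp
    then show ?thesis using pi_gt3 by simp
  qed
  fix i j :: nat assume ij: "i \<in> {1..}" "j \<in> {1..}" and "cis (1 / real i) = cis (1 / real j)"
  then have "cos (1 / real i) = cos (1 / real j)"
    by (metis cis.sel(1))
  then have "1 / real i = 1 / real j"
    using cos_inj_pi angle[OF ij(1)] angle[OF ij(2)] by blast
  then show "i = j" by simp
qed

theorem lemma2p2:
  fixes n :: nat and m :: "nat \<Rightarrow> nat"
  assumes "\<forall>i\<in>{1..n}. m i > 0"
  shows "\<exists>(P::complex poly) (c::nat \<Rightarrow> complex).
           critically_fixed_poly P \<and> inj_on c {1..n} \<and>
           (\<forall>i\<in>{1..n}. is_crit_point P (c i) \<and> crit_mult P (c i) = m i)"
proof (cases "n = 0")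
  case True
  have "critically_fixed_poly [:0, 0, 1:]"
    by (simp add: critically_fixed_poly_def is_crit_point_def pderiv_pCons)
  with True show ?thesis by auto
next
  case False
  interpret circle_configuration "{1..n}" m "\<lambda>j. cis (1 / real j)"
    using False assms inj_on_subset[OF inj_on_cis_inverse] by unfold_locales auto
  obtain K c where c: "inj_on c {1..n}" "\<And>j. j \<in> {1..n} \<Longrightarrow> c j \<noteq> 0"
    and solves: "\<And>j. j \<in> {1..n} \<Longrightarrow>
                   c j ^ (K + m j + 1) * (-1) ^ m j * beta_moment K {1..n} m c j = c j"
    using exists_solution by blast
  obtain P where P': "pderiv P = prescribed_pderiv K {1..n} m c" and P0: "poly P 0 = 0"
    using exists_antiderivative by blast
  have "poly P (c j) = c j" if "j \<in> {1..n}" for j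
    using poly_antiderivative_at[OF P' P0 _ that] solves[OF that] by simp
  then have "critically_fixed_poly P"
    using False assms by (intro critically_fixed_antiderivative[OF P' P0]) auto
  moreover have "\<forall>i\<in>{1..n}. is_crit_point P (c i) \<and> crit_mult P (c i) = m i"
    using crit_mult_antiderivative[OF P'] c assms by simp
  ultimately show ?thesis
    using c by blast
qed

end
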